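(* Consider the convex problem of minimizing $F(\beta)=(n^{(0)})^{-1/2}\sum_{t=1}^k\|Y^{(t)}-\mathbf X^{(t)}\beta^{(t)}\|+\lambda\sum_{l=1}^p\|\beta_{(l)}\|$ over $\beta\in\mathbb R^{pk}$, solved by the scaled iterative thresholding algorithm described in the context with rescaling constant $K_0>0$. Assume $\lambda>0$ and $\min_{1\le t\le k}\inf_{\zeta\in A^t}\|\mathbf X^{(t)}\zeta-Y^{(t)}\|>c_0$ for some constant $c_0>0$, where $A^t=\{v\beta(m)^{(t)}+(1-v)\beta(m+1)^{(t)}:v\in[0,1],\ m=0,1,\dots\}$. Then for large enough $K_0$, the sequence of iterates $\beta(m)$ converges to the global optimum (a global minimizer) of the problem.
   Context: Data: for $t=1,\dots,k$, $Y^{(t)}\in\mathbb R^{n^{(t)}}$ and $\mathbf X^{(t)}\in\mathbb R^{n^{(t)}\times p}$; $n^{(0)}=\min_tn^{(t)}$. For $\beta=(\beta^{(1)\prime},\dots,\beta^{(k)\prime})'\in\mathbb R^{pk}$ with $\beta^{(t)}\in\mathbb R^p$, $\beta_{(l)}=(\beta^{(1)}_l,\dots,\beta^{(k)}_l)'\in\mathbb R^k$. $\|\cdot\|$ is the Euclidean norm. Algorithm: Step 1 (rescaling): replace $Y^{(t)}$ by $Y^{(t)}/K_0$, $\mathbf X^{(t)}$ by $\mathbf X^{(t)}/K_0$ for all $t$, and $\lambda$ by $\lambda/K_0$ (this does not change the minimizer); below $Y^{(t)},\mathbf X^{(t)},\lambda$ denote the rescaled quantities. Step 2 (iteration): from an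 initial $\beta(0)\in\mathbb R^{pk}$, given $\beta(m)$ define $R(m)^{(t)}=(\mathbf X^{(t)})'(\mathbf X^{(t)}\beta(m)^{(t)}-Y^{(t)})/[(n^{(0)})^{1/2}\|\mathbf X^{(t)}\beta(m)^{(t)}-Y^{(t)}\|]\in\mathbb R^p$, stack them into $R(m)\in\mathbb R^{pk}$ with groups $R(m)_{(l)}\in\mathbb R^k$ as for $\beta$, let $A(m)=\sum_{t=1}^k[(n^{(0)})^{1/2}\|\mathbf X^{(t)}\beta(m)^{(t)}-Y^{(t)}\|]^{-1}$, and set $\beta(m+1)_{(l)}=\vec\Theta\big(\beta(m)_{(l)}-R(m)_{(l)}/A(m);\lambda/A(m)\big)$ for $l=1,\dots,p$, where $\vec\Theta(0;\lambda)=0$ and $\vec\Theta(a;\lambda)=a\,(\|a\|-\lambda)_+/\|a\|$ for $a\ne0$ (multivariate soft-thresholding). *)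

theory Defs
  imports "HOL-Analysis.Analysis"
begin

text \<open>Tasks are indexed by t < k, observations of task t by i < n t,
  covariates by j < p (0-based). Design: X t i j, response: Y t i.
  A coefficient vector beta in R^{pk} is a function b with b t l = beta^{(t)}_l.\<close>

definition n0 :: "nat \<Rightarrow> (nat \<Rightarrow> nat) \<Rightarrow> nat" where
  "n0 k n = Min (n ` {..<k})"

definition res_norm ::
  "nat \<Rightarrow> (nat \<Rightarrow> nat) \<Rightarrow> (nat \<Rightarrow> nat \<Rightarrow> nat \<Rightarrow> real) \<Rightarrow> (nat \<Rightarrow> nat \<Rightarrow> real)
   \<Rightarrow> nat \<Rightarrow> (nat \<Rightarrow> real) \<Rightarrow> real" where
  "res_norm p n X Y t z = sqrt (\<Sum>i<n t. ((\<Sum>j<p. X t i j * z j) - Y t i)^2)"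

definition objective ::
  "nat \<Rightarrow> nat \<Rightarrow> (nat \<Rightarrow> nat) \<Rightarrow> (nat \<Rightarrow> nat \<Rightarrow> nat \<Rightarrow> real) \<Rightarrow> (nat \<Rightarrow> nat \<Rightarrow> real)
   \<Rightarrow> real \<Rightarrow> (nat \<Rightarrow> nat \<Rightarrow> real) \<Rightarrow> real" where
  "objective k p n X Y lam b =
     (\<Sum>t<k. res_norm p n X Y t (b t)) / sqrt (real (n0 k n))
     + lam * (\<Sum>l<p. sqrt (\<Sum>t<k. (b t l)^2))"

definition soft_thr :: "nat \<Rightarrow> (nat \<Rightarrow> real) \<Rightarrow> real \<Rightarrow> nat \<Rightarrow> real" where
  "soft_thr k a lam t =
     (let na = sqrt (\<Sum>s<k. (a s)^2) in
      if na = 0 then 0 else a t * max (na - lam) 0 / na)"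

text \<open>One iteration (Step 2) on data X, Y, lam (already rescaled).\<close>
definition sit_step ::
  "nat \<Rightarrow> nat \<Rightarrow> (nat \<Rightarrow> nat) \<Rightarrow> (nat \<Rightarrow> nat \<Rightarrow> nat \<Rightarrow> real) \<Rightarrow> (nat \<Rightarrow> nat \<Rightarrow> real)
   \<Rightarrow> real \<Rightarrow> (nat \<Rightarrow> nat \<Rightarrow> real) \<Rightarrow> (nat \<Rightarrow> nat \<Rightarrow> real)" where
  "sit_step k p n X Y lam b =
     (let r = (\<lambda>t. sqrt (real (n0 k n)) * res_norm p n X Y t (b t));
          R = (\<lambda>t l. (\<Sum>i<n t. X t i l * ((\<Sum>j<p. X t i j * b t j) - Y t i)) / r t);
          A = (\<Sum>t<k. 1 / r t)
      in (\<lambda>t l. if t < k \<and> l < p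
                 then soft_thr k (\<lambda>s. b s l - R s l / A) (lam / A) t
                 else 0))"

definition sit_iter ::
  "nat \<Rightarrow> nat \<Rightarrow> (nat \<Rightarrow> nat) \<Rightarrow> (nat \<Rightarrow> nat \<Rightarrow> nat \<Rightarrow> real) \<Rightarrow> (nat \<Rightarrow> nat \<Rightarrow> real)
   \<Rightarrow> real \<Rightarrow> real \<Rightarrow> (nat \<Rightarrow> nat \<Rightarrow> real) \<Rightarrow> nat \<Rightarrow> (nat \<Rightarrow> nat \<Rightarrow> real)" where
  "sit_iter k p n X Y lam K0 b0 m =
     (sit_step k p n (\<lambda>t i j. X t i j / K0) (\<lambda>t i. Y t i / K0) (lam / K0) ^^ m) b0"

definition seg_set :: "(nat \<Rightarrow> nat \<Rightarrow> nat \<Rightarrow> real) \<Rightarrow> nat \<Rightarrow> (nat \<Rightarrow> real) set" where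
  "seg_set beta t = {(\<lambda>j. v * beta m t j + (1 - v) * beta (Suc m) t j) | v m. v \<in> {0..1}}"

end

theory Submission
  imports Defs
begin

text \<open>After rescaling by \<open>K\<^sub>0\<close> so that every design matrix has Frobenius norm at most one,
  one iteration is a proximal-gradient step for a quadratic majorizer of the objective at
  \<open>\<beta>(m)\<close>: the tangent bounds of the Euclidean norm control the data-fit terms, and
  multivariate soft-thresholding is the exact proximal map of the group penalty. This gives
  the three-point inequality
  \<open>F(\<beta>(m+1)) + A(m)/2 |x - \<beta>(m+1)|\<^sup>2 \<le> F(x) + A(m)/2 |x - \<beta>(m)|\<^sup>2\<close> for every \<open>x\<close>.
  Residuals bounded below by \<open>c\<^sub>0\<close> keep \<open>A(m)\<close> bounded, so the iterates are Fejer monotone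
  with respect to every minimizer (one exists since \<open>F\<close> is continuous and coercive),
  \<open>F(\<beta>(m))\<close> tends to the minimum, any cluster point is a minimizer, and Fejer monotonicity
  towards that cluster point forces convergence of the whole sequence.\<close>

lemma sum_mult_le_sqrt_sum_squares:
  fixes x y :: "'a \<Rightarrow> real"
  shows "(\<Sum>i\<in>I. x i * y i) \<le> sqrt (\<Sum>i\<in>I. (x i)\<^sup>2) * sqrt (\<Sum>i\<in>I. (y i)\<^sup>2)"
proof -
  have "(\<Sum>i\<in>I. x i * y i) \<le> sqrt ((\<Sum>i\<in>I. x i * y i)\<^sup>2)"
    by simp
  also have "\<dots> \<le> sqrt ((\<Sum>i\<in>I. (x i)\<^sup>2) * (\<Sum>i\<in>I. (y i)\<^sup>2))"
    by (rule real_sqrt_le_mono[OF Cauchy_Schwarz_ineq_sum])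
  finally show ?thesis
    by (simp add: real_sqrt_mult)
qed

lemma sqrt_sum_squares_tangent_lower:
  fixes u w :: "'a \<Rightarrow> real"
  assumes pos: "0 < sqrt (\<Sum>i\<in>I. (u i)\<^sup>2)"
  shows "sqrt (\<Sum>i\<in>I. (u i)\<^sup>2) + (\<Sum>i\<in>I. u i * w i) / sqrt (\<Sum>i\<in>I. (u i)\<^sup>2)
           \<le> sqrt (\<Sum>i\<in>I. (u i + w i)\<^sup>2)"
proof -
  define a where "a = sqrt (\<Sum>i\<in>I. (u i)\<^sup>2)"
  have "a\<^sup>2 + (\<Sum>i\<in>I. u i * w i) = (\<Sum>i\<in>I. u i * (u i + w i))"
    unfolding a_def by (simp add: sum_nonneg distrib_left sum.distrib power2_eq_square)
  also have "\<dots> \<le> a * sqrt (\<Sum>i\<in>I. (u i + w i)\<^sup>2)"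
    unfolding a_def by (rule sum_mult_le_sqrt_sum_squares)
  finally show ?thesis
    using pos unfolding a_def[symmetric] by (simp add: field_simps power2_eq_square)
qed

lemma sqrt_sum_squares_tangent_upper:
  fixes u w :: "'a \<Rightarrow> real"
  assumes pos: "0 < sqrt (\<Sum>i\<in>I. (u i)\<^sup>2)"
  shows "sqrt (\<Sum>i\<in>I. (u i + w i)\<^sup>2)
           \<le> sqrt (\<Sum>i\<in>I. (u i)\<^sup>2) + (\<Sum>i\<in>I. u i * w i) / sqrt (\<Sum>i\<in>I. (u i)\<^sup>2)
             + (\<Sum>i\<in>I. (w i)\<^sup>2) / (2 * sqrt (\<Sum>i\<in>I. (u i)\<^sup>2))"
proof -
  define a where "a = sqrt (\<Sum>i\<in>I. (u i)\<^sup>2)"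
  define c where "c = sqrt (\<Sum>i\<in>I. (u i + w i)\<^sup>2)"
  have "c\<^sup>2 = (\<Sum>i\<in>I. (u i + w i)\<^sup>2)"
    unfolding c_def by (simp add: sum_nonneg)
  also have "\<dots> = (\<Sum>i\<in>I. (u i)\<^sup>2 + 2 * (u i * w i) + (w i)\<^sup>2)"
    by (intro sum.cong refl) (simp add: power2_sum)
  also have "\<dots> = a\<^sup>2 + 2 * (\<Sum>i\<in>I. u i * w i) + (\<Sum>i\<in>I. (w i)\<^sup>2)"
    unfolding a_def by (simp add: sum.distrib sum_distrib_left sum_nonneg)
  finally have c2: "c\<^sup>2 = a\<^sup>2 + 2 * (\<Sum>i\<in>I. u i * w i) + (\<Sum>i\<in>I. (w i)\<^sup>2)" .
  have "2 * a * c \<le> a\<^sup>2 + c\<^sup>2"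
    using sum_squares_bound[of a c] by simp
  then have "c * (2 * a) \<le> 2 * a\<^sup>2 + 2 * (\<Sum>i\<in>I. u i * w i) + (\<Sum>i\<in>I. (w i)\<^sup>2)"
    using c2 by (simp add: mult_ac)
  then show ?thesis
    using pos unfolding a_def[symmetric] c_def[symmetric] by (simp add: field_simps power2_eq_square)
qed

lemma sum_squares_matrix_vector_le:
  fixes M :: "'a \<Rightarrow> 'b \<Rightarrow> real"
  shows "(\<Sum>i\<in>I. (\<Sum>j\<in>J. M i j * d j)\<^sup>2) \<le> (\<Sum>i\<in>I. \<Sum>j\<in>J. (M i j)\<^sup>2) * (\<Sum>j\<in>J. (d j)\<^sup>2)"
proof -
  have "(\<Sum>i\<in>I. (\<Sum>j\<in>J. M i j * d j)\<^sup>2) \<le> (\<Sum>i\<in>I. (\<Sum>j\<in>J. (M i j)\<^sup>2) * (\<Sum>j\<in>J. (d j)\<^sup>2))"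
    by (intro sum_mono Cauchy_Schwarz_ineq_sum)
  also have "\<dots> = (\<Sum>i\<in>I. \<Sum>j\<in>J. (M i j)\<^sup>2) * (\<Sum>j\<in>J. (d j)\<^sup>2)"
    by (rule sum_distrib_right[symmetric])
  finally show ?thesis .
qed

lemma soft_thr_variational_ineq:
  fixes a x :: "nat \<Rightarrow> real" and k :: nat
  assumes tau: "0 \<le> tau"
  defines "y \<equiv> soft_thr k a tau"
  shows "tau * sqrt (\<Sum>t<k. (y t)\<^sup>2) - tau * sqrt (\<Sum>t<k. (x t)\<^sup>2)
           \<le> (\<Sum>t<k. (x t - y t) * (y t - a t))"
proof -
  define na where "na = sqrt (\<Sum>t<k. (a t)\<^sup>2)"
  define nx where "nx = sqrt (\<Sum>t<k. (x t)\<^sup>2)"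
  have cs: "(\<Sum>t<k. x t * a t) \<le> nx * na"
    unfolding nx_def na_def by (rule sum_mult_le_sqrt_sum_squares)
  have "0 \<le> nx"
    unfolding nx_def by (simp add: sum_nonneg)
  show ?thesis
  proof (cases "na \<le> tau")
    case True
    then have y0: "\<And>t. y t = 0"
      unfolding y_def soft_thr_def Let_def na_def[symmetric] by auto
    have "nx * na \<le> tau * nx"
      using mult_left_mono[OF True \<open>0 \<le> nx\<close>] by (simp add: mult.commute)
    then show ?thesis
      using cs by (simp add: y0 sum_negf flip: nx_def)
  next
    case False
    then have "0 < na"
      using tau by simp
    have y: "\<And>t. y t = (1 - tau / na) * a t"
      unfolding y_def soft_thr_def Let_def na_def[symmetric]
      using False \<open>0 < na\<close> by (auto simp: field_simps)
    have ssa: "(\<Sum>t<k. (a t)\<^sup>2) = na\<^sup>2"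
      unfolding na_def by (simp add: sum_nonneg)
    have "(\<Sum>t<k. (y t)\<^sup>2) = (na - tau)\<^sup>2"
      using \<open>0 < na\<close> by (simp add: y power_mult_distrib ssa flip: sum_distrib_left)
        (simp add: field_simps power2_eq_square)
    then have ny: "sqrt (\<Sum>t<k. (y t)\<^sup>2) = na - tau"
      using False by simp
    have "(\<Sum>t<k. (x t - y t) * (y t - a t))
            = (tau / na) * (1 - tau / na) * (\<Sum>t<k. (a t)\<^sup>2) - (tau / na) * (\<Sum>t<k. x t * a t)"
      by (simp add: y algebra_simps power2_eq_square sum_distrib_left sum_subtractf sum.distrib)
    also have "\<dots> = tau * (na - tau) - (tau / na) * (\<Sum>t<k. x t * a t)"
      using \<open>0 < na\<close> unfolding ssa by (simp add: field_simps power2_eq_square)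
    finally have inner: "(\<Sum>t<k. (x t - y t) * (y t - a t))
                           = tau * (na - tau) - (tau / na) * (\<Sum>t<k. x t * a t)" .
    have "(tau / na) * (\<Sum>t<k. x t * a t) \<le> (tau / na) * (nx * na)"
      using cs \<open>0 < na\<close> tau by (intro mult_left_mono) auto
    then show ?thesis
      using \<open>0 < na\<close> by (simp add: inner ny flip: nx_def)
  qed
qed

lemma soft_thr_prox_grad_ineq:
  fixes b g x y :: "nat \<Rightarrow> real"
  assumes A: "0 < A" and lam: "0 \<le> lam"
    and y: "\<And>t. t < k \<Longrightarrow> y t = soft_thr k (\<lambda>s. b s - g s / A) (lam / A) t"
  shows "A / 2 * (\<Sum>t<k. (x t - y t)\<^sup>2) + A / 2 * (\<Sum>t<k. (y t - b t)\<^sup>2)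
           + (\<Sum>t<k. g t * (y t - b t)) + lam * sqrt (\<Sum>t<k. (y t)\<^sup>2)
         \<le> A / 2 * (\<Sum>t<k. (x t - b t)\<^sup>2) + (\<Sum>t<k. g t * (x t - b t))
           + lam * sqrt (\<Sum>t<k. (x t)\<^sup>2)"
proof -
  define a where "a = (\<lambda>s. b s - g s / A)"
  have sum_y: "(\<Sum>t<k. f t (y t)) = (\<Sum>t<k. f t (soft_thr k a (lam / A) t))" for f
    using y unfolding a_def by (intro sum.cong) auto
  have "lam / A * sqrt (\<Sum>t<k. (y t)\<^sup>2) - lam / A * sqrt (\<Sum>t<k. (x t)\<^sup>2)
          \<le> (\<Sum>t<k. (x t - y t) * (y t - a t))"
    using soft_thr_variational_ineq[of "lam / A" k a x] A lam
      sum_y[of "\<lambda>t v. v\<^sup>2"] sum_y[of "\<lambda>t v. (x t - v) * (v - a t)"] by simp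
  also have "\<dots> = (\<Sum>t<k. (x t - y t) * (A * (y t - b t) + g t)) / A"
    using A by (simp add: a_def sum_divide_distrib field_simps)
  finally have "(lam * sqrt (\<Sum>t<k. (y t)\<^sup>2) - lam * sqrt (\<Sum>t<k. (x t)\<^sup>2)) / A
                  \<le> (\<Sum>t<k. (x t - y t) * (A * (y t - b t) + g t)) / A"
    by (simp add: diff_divide_distrib)
  then have "lam * sqrt (\<Sum>t<k. (y t)\<^sup>2) - lam * sqrt (\<Sum>t<k. (x t)\<^sup>2)
               \<le> (\<Sum>t<k. (x t - y t) * (A * (y t - b t) + g t))"
    using A by (simp add: divide_le_cancel)
  moreover have "A / 2 * (x t - y t)\<^sup>2 + A / 2 * (y t - b t)\<^sup>2 + g t * (y t - b t)
      = A / 2 * (x t - b t)\<^sup>2 + g t * (x t - b t) - (x t - y t) * (A * (y t - b t) + g t)" for t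
    by (simp add: power2_eq_square algebra_simps)
  then have "A / 2 * (\<Sum>t<k. (x t - y t)\<^sup>2) + A / 2 * (\<Sum>t<k. (y t - b t)\<^sup>2)
      + (\<Sum>t<k. g t * (y t - b t))
      = A / 2 * (\<Sum>t<k. (x t - b t)\<^sup>2) + (\<Sum>t<k. g t * (x t - b t))
        - (\<Sum>t<k. (x t - y t) * (A * (y t - b t) + g t))"
    by (simp add: sum_distrib_left sum_subtractf flip: sum.distrib)
  ultimately show ?thesis
    by linarith
qed

definition res_grad ::
  "nat \<Rightarrow> (nat \<Rightarrow> nat) \<Rightarrow> (nat \<Rightarrow> nat \<Rightarrow> nat \<Rightarrow> real) \<Rightarrow> (nat \<Rightarrow> nat \<Rightarrow> real)
   \<Rightarrow> nat \<Rightarrow> (nat \<Rightarrow> real) \<Rightarrow> nat \<Rightarrow> real" where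
  "res_grad p n X Y t z l = (\<Sum>i<n t. X t i l * ((\<Sum>j<p. X t i j * z j) - Y t i))"

lemma res_norm_shift:
  "res_norm p n X Y t z
     = sqrt (\<Sum>i<n t. ((\<Sum>j<p. X t i j * b j) - Y t i + (\<Sum>j<p. X t i j * (z j - b j)))\<^sup>2)"
  unfolding res_norm_def by (simp add: algebra_simps sum_subtractf)

lemma sum_residual_mult_eq_res_grad:
  "(\<Sum>i<n t. ((\<Sum>j<p. X t i j * b j) - Y t i) * (\<Sum>j<p. X t i j * (z j - b j)))
     = (\<Sum>l<p. res_grad p n X Y t b l * (z l - b l))"
  unfolding res_grad_def
  by (simp add: sum_distrib_left sum_distrib_right sum.swap[of _ "{..<n t}"] mult_ac)

lemma res_norm_tangent_lower:
  assumes "0 < res_norm p n X Y t b"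
  shows "res_norm p n X Y t b + (\<Sum>l<p. res_grad p n X Y t b l * (z l - b l)) / res_norm p n X Y t b
           \<le> res_norm p n X Y t z"
  using sqrt_sum_squares_tangent_lower[where I = "{..<n t}"
      and u = "\<lambda>i. (\<Sum>j<p. X t i j * b j) - Y t i" and w = "\<lambda>i. \<Sum>j<p. X t i j * (z j - b j)"] assms
  unfolding res_norm_shift[of p n X Y t z b] sum_residual_mult_eq_res_grad
  by (simp add: res_norm_def)

lemma res_norm_quadratic_upper:
  assumes pos: "0 < res_norm p n X Y t b"
  shows "res_norm p n X Y t z
           \<le> res_norm p n X Y t b + (\<Sum>l<p. res_grad p n X Y t b l * (z l - b l)) / res_norm p n X Y t b
             + (\<Sum>i<n t. \<Sum>j<p. (X t i j)\<^sup>2) * (\<Sum>l<p. (z l - b l)\<^sup>2) / (2 * res_norm p n X Y t b)"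
proof -
  have "(\<Sum>i<n t. (\<Sum>j<p. X t i j * (z j - b j))\<^sup>2) / (2 * res_norm p n X Y t b)
          \<le> (\<Sum>i<n t. \<Sum>j<p. (X t i j)\<^sup>2) * (\<Sum>l<p. (z l - b l)\<^sup>2) / (2 * res_norm p n X Y t b)"
    using pos by (intro divide_right_mono sum_squares_matrix_vector_le) auto
  moreover have "res_norm p n X Y t z
      \<le> res_norm p n X Y t b + (\<Sum>l<p. res_grad p n X Y t b l * (z l - b l)) / res_norm p n X Y t b
        + (\<Sum>i<n t. (\<Sum>j<p. X t i j * (z j - b j))\<^sup>2) / (2 * res_norm p n X Y t b)"
    using sqrt_sum_squares_tangent_upper[where I = "{..<n t}"
        and u = "\<lambda>i. (\<Sum>j<p. X t i j * b j) - Y t i" and w = "\<lambda>i. \<Sum>j<p. X t i j * (z j - b j)"] pos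
    unfolding res_norm_shift[of p n X Y t z b] sum_residual_mult_eq_res_grad
    by (simp add: res_norm_def)
  ultimately show ?thesis
    by linarith
qed

definition sq_dist :: "nat \<Rightarrow> nat \<Rightarrow> (nat \<Rightarrow> nat \<Rightarrow> real) \<Rightarrow> (nat \<Rightarrow> nat \<Rightarrow> real) \<Rightarrow> real" where
  "sq_dist k p x y = (\<Sum>t<k. \<Sum>l<p. (x t l - y t l)\<^sup>2)"

lemma sum_res_norm_tangent_lower:
  fixes b x :: "nat \<Rightarrow> nat \<Rightarrow> real"
  assumes s: "0 < s" and pos: "\<forall>t<k. 0 < res_norm p n X Y t (b t)"
  shows "(\<Sum>t<k. res_norm p n X Y t (b t) / s)
           + (\<Sum>t<k. \<Sum>l<p. res_grad p n X Y t (b t) l / (s * res_norm p n X Y t (b t)) * (x t l - b t l))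
         \<le> (\<Sum>t<k. res_norm p n X Y t (x t) / s)"
proof -
  have "res_norm p n X Y t (b t) / s
          + (\<Sum>l<p. res_grad p n X Y t (b t) l / (s * res_norm p n X Y t (b t)) * (x t l - b t l))
        \<le> res_norm p n X Y t (x t) / s" if "t < k" for t
  proof -
    have "(res_norm p n X Y t (b t) + (\<Sum>l<p. res_grad p n X Y t (b t) l * (x t l - b t l))
             / res_norm p n X Y t (b t)) / s
          \<le> res_norm p n X Y t (x t) / s"
      using res_norm_tangent_lower[of p n X Y t "b t" "x t"] pos that s by (intro divide_right_mono) auto
    then show ?thesis
      by (simp add: add_divide_distrib sum_divide_distrib mult_ac)
  qed
  then have "(\<Sum>t<k. res_norm p n X Y t (b t) / s
      + (\<Sum>l<p. res_grad p n X Y t (b t) l / (s * res_norm p n X Y t (b t)) * (x t l - b t l)))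
        \<le> (\<Sum>t<k. res_norm p n X Y t (x t) / s)"
    by (intro sum_mono) auto
  then show ?thesis
    by (simp add: sum.distrib)
qed

lemma sum_res_norm_quadratic_upper:
  fixes b x :: "nat \<Rightarrow> nat \<Rightarrow> real"
  assumes s: "0 < s" and pos: "\<forall>t<k. 0 < res_norm p n X Y t (b t)"
    and frob: "\<forall>t<k. (\<Sum>i<n t. \<Sum>j<p. (X t i j)\<^sup>2) \<le> 1"
  shows "(\<Sum>t<k. res_norm p n X Y t (x t) / s)
           \<le> (\<Sum>t<k. res_norm p n X Y t (b t) / s)
             + (\<Sum>t<k. \<Sum>l<p. res_grad p n X Y t (b t) l / (s * res_norm p n X Y t (b t)) * (x t l - b t l))
             + (\<Sum>t<k. 1 / (s * res_norm p n X Y t (b t))) / 2 * sq_dist k p x b"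
proof -
  define r where "r t = s * res_norm p n X Y t (b t)" for t
  define A where "A = (\<Sum>t<k. 1 / r t)"
  have r_pos: "0 < r t" if "t < k" for t
    using pos that s unfolding r_def by simp
  have "res_norm p n X Y t (x t) / s
          \<le> res_norm p n X Y t (b t) / s + (\<Sum>l<p. res_grad p n X Y t (b t) l / r t * (x t l - b t l))
            + A / 2 * (\<Sum>l<p. (x t l - b t l)\<^sup>2)" if "t < k" for t
  proof -
    define q where "q = (\<Sum>l<p. (x t l - b t l)\<^sup>2)"
    define fr where "fr = (\<Sum>i<n t. \<Sum>j<p. (X t i j)\<^sup>2)"
    have "0 \<le> q"
      unfolding q_def by (simp add: sum_nonneg)
    have "res_norm p n X Y t (x t) / s
            \<le> (res_norm p n X Y t (b t)
               + (\<Sum>l<p. res_grad p n X Y t (b t) l * (x t l - b t l)) / res_norm p n X Y t (b t)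
               + fr * q / (2 * res_norm p n X Y t (b t))) / s"
      using res_norm_quadratic_upper[of p n X Y t "b t" "x t"] pos that s
      unfolding q_def fr_def by (intro divide_right_mono) auto
    also have "\<dots> = res_norm p n X Y t (b t) / s
                     + (\<Sum>l<p. res_grad p n X Y t (b t) l / r t * (x t l - b t l)) + fr * q * (1 / r t) / 2"
      by (simp add: r_def add_divide_distrib sum_divide_distrib mult_ac)
    also have "fr * q * (1 / r t) \<le> 1 * q * A"
    proof (intro mult_mono mult_right_mono)
      show "fr \<le> 1"
        using frob that unfolding fr_def by simp
      show "1 / r t \<le> A"
        unfolding A_def using r_pos that by (intro member_le_sum) (auto intro: less_imp_le)
    qed (use \<open>0 \<le> q\<close> r_pos[OF that] in auto)
    finally show ?thesis
      by (simp add: q_def mult.commute)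
  qed
  then have "(\<Sum>t<k. res_norm p n X Y t (x t) / s)
      \<le> (\<Sum>t<k. res_norm p n X Y t (b t) / s + (\<Sum>l<p. res_grad p n X Y t (b t) l / r t * (x t l - b t l))
              + A / 2 * (\<Sum>l<p. (x t l - b t l)\<^sup>2))"
    by (intro sum_mono) auto
  then show ?thesis
    unfolding sq_dist_def A_def r_def by (simp add: sum.distrib sum_distrib_left)
qed

text \<open>The three-point inequality: the step minimizes a majorizer of the objective with
  curvature \<open>A\<close>; the majorization is where the Frobenius bound on the designs enters.\<close>

lemma sit_step_descent:
  fixes b x :: "nat \<Rightarrow> nat \<Rightarrow> real"
  assumes k: "0 < k" and lam: "0 \<le> lam" and frob: "\<forall>t<k. (\<Sum>i<n t. \<Sum>j<p. (X t i j)\<^sup>2) \<le> 1"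
    and n0: "0 < n0 k n" and pos: "\<forall>t<k. 0 < res_norm p n X Y t (b t)"
  defines "A \<equiv> (\<Sum>t<k. 1 / (sqrt (real (n0 k n)) * res_norm p n X Y t (b t)))"
  shows "objective k p n X Y lam (sit_step k p n X Y lam b) + A / 2 * sq_dist k p x (sit_step k p n X Y lam b)
           \<le> objective k p n X Y lam x + A / 2 * sq_dist k p x b"
proof -
  define s0 where "s0 = sqrt (real (n0 k n))"
  define g where "g t l = res_grad p n X Y t (b t) l / (s0 * res_norm p n X Y t (b t))" for t l
  define b' where "b' = sit_step k p n X Y lam b"
  define Lin where "Lin z = (\<Sum>t<k. \<Sum>l<p. g t l * (z t l - b t l))" for z
  define Pen where "Pen z = (\<Sum>l<p. sqrt (\<Sum>t<k. (z t l)\<^sup>2))" for z :: "nat \<Rightarrow> nat \<Rightarrow> real"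
  define Fit where "Fit z = (\<Sum>t<k. res_norm p n X Y t (z t) / s0)" for z :: "nat \<Rightarrow> nat \<Rightarrow> real"
  have "0 < s0"
    using n0 unfolding s0_def by simp
  have "0 < A"
    unfolding A_def using k pos n0 by (intro sum_pos) auto
  have b'_eq: "b' t l = soft_thr k (\<lambda>s. b s l - g s l / A) (lam / A) t" if "t < k" "l < p" for t l
    using that unfolding b'_def sit_step_def Let_def g_def A_def s0_def res_grad_def by simp
  have objective_eq: "objective k p n X Y lam z = Fit z + lam * Pen z" for z
    unfolding objective_def Fit_def Pen_def s0_def by (simp add: sum_divide_distrib)
  have fit_lower: "Fit b + Lin x \<le> Fit x"
    using sum_res_norm_tangent_lower[OF \<open>0 < s0\<close> pos] unfolding Fit_def Lin_def g_def .
  have fit_upper: "Fit b' \<le> Fit b + Lin b' + A / 2 * sq_dist k p b' b"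
    using sum_res_norm_quadratic_upper[OF \<open>0 < s0\<close> pos frob]
    unfolding Fit_def Lin_def g_def A_def s0_def .
  have "(\<Sum>l<p. A / 2 * (\<Sum>t<k. (x t l - b' t l)\<^sup>2) + A / 2 * (\<Sum>t<k. (b' t l - b t l)\<^sup>2)
               + (\<Sum>t<k. g t l * (b' t l - b t l)) + lam * sqrt (\<Sum>t<k. (b' t l)\<^sup>2))
          \<le> (\<Sum>l<p. A / 2 * (\<Sum>t<k. (x t l - b t l)\<^sup>2) + (\<Sum>t<k. g t l * (x t l - b t l))
               + lam * sqrt (\<Sum>t<k. (x t l)\<^sup>2))"
    using \<open>0 < A\<close> lam b'_eq by (intro sum_mono soft_thr_prox_grad_ineq) auto
  moreover have swap: "(\<Sum>t<k. \<Sum>l<p. f t l) = (\<Sum>l<p. \<Sum>t<k. f t l)" for f :: "nat \<Rightarrow> nat \<Rightarrow> real"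
    by (rule sum.swap)
  ultimately have prox: "A / 2 * sq_dist k p x b' + A / 2 * sq_dist k p b' b + Lin b' + lam * Pen b'
                           \<le> A / 2 * sq_dist k p x b + Lin x + lam * Pen x"
    unfolding sq_dist_def Lin_def Pen_def swap by (simp add: sum.distrib sum_distrib_left)
  show ?thesis
    using fit_lower fit_upper prox unfolding objective_eq b'_def[symmetric] by linarith
qed

lemma sq_dist_nonneg: "0 \<le> sq_dist k p x y"
  unfolding sq_dist_def by (intro sum_nonneg zero_le_power2)

lemma abs_le_sqrt_sq_dist:
  assumes "t < k" "l < p"
  shows "\<bar>x t l - y t l\<bar> \<le> sqrt (sq_dist k p x y)"
proof -
  have "(x t l - y t l)\<^sup>2 \<le> (\<Sum>l<p. (x t l - y t l)\<^sup>2)"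
    using assms by (intro member_le_sum) auto
  also have "\<dots> \<le> sq_dist k p x y"
    unfolding sq_dist_def using assms
    by (intro member_le_sum[of t "{..<k}" "\<lambda>t. \<Sum>l<p. (x t l - y t l)\<^sup>2"]) (auto intro: sum_nonneg)
  finally show ?thesis
    using real_sqrt_le_mono by fastforce
qed

lemma bounded_coords_convergent_subseq:
  fixes z :: "nat \<Rightarrow> 'a \<Rightarrow> 'b \<Rightarrow> real"
  assumes "finite S" and "\<forall>(t, l)\<in>S. \<exists>B. \<forall>j. \<bar>z j t l\<bar> \<le> B"
  shows "\<exists>\<phi> c. strict_mono \<phi> \<and> (\<forall>(t, l)\<in>S. (\<lambda>j. z (\<phi> j) t l) \<longlonglongrightarrow> c t l)"
  using assms
proof (induction S rule: finite_induct)
  case empty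
  show ?case
    by (rule exI[of _ id]) (auto simp: strict_mono_def)
next
  case (insert q S)
  obtain t0 l0 where q: "q = (t0, l0)"
    by (cases q)
  from insert obtain \<phi> c where \<phi>: "strict_mono \<phi>"
    and lim: "\<forall>(t, l)\<in>S. (\<lambda>j. z (\<phi> j) t l) \<longlonglongrightarrow> c t l"
    by auto
  from insert.prems q obtain B where B: "\<And>j. \<bar>z j t0 l0\<bar> \<le> B"
    by auto
  obtain \<psi> where \<psi>: "strict_mono \<psi>" and mono: "monoseq (\<lambda>j. z (\<phi> (\<psi> j)) t0 l0)"
    using seq_monosub[of "\<lambda>j. z (\<phi> j) t0 l0"] by auto
  obtain L where L: "(\<lambda>j. z (\<phi> (\<psi> j)) t0 l0) \<longlonglongrightarrow> L"
    using monoseq_convergent[OF mono, of B] B by blast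
  have "(\<lambda>j. z (\<phi> (\<psi> j)) t l) \<longlonglongrightarrow> (c(t0 := (c t0)(l0 := L))) t l" if "(t, l) \<in> insert q S" for t l
  proof (cases "(t, l) = (t0, l0)")
    case True
    then show ?thesis
      using L by auto
  next
    case False
    then have "(\<lambda>j. z (\<phi> j) t l) \<longlonglongrightarrow> c t l"
      using that q lim by auto
    from LIMSEQ_subseq_LIMSEQ[OF this \<psi>] show ?thesis
      using False by (auto simp: o_def)
  qed
  then have "\<forall>(t, l)\<in>insert q S. (\<lambda>j. z (\<phi> (\<psi> j)) t l) \<longlonglongrightarrow> (c(t0 := (c t0)(l0 := L))) t l"
    by blast
  with strict_mono_compose[OF \<phi> \<psi>] show ?case
    by blast
qed

lemma decseq_sq_dist_subseq_imp_LIMSEQ: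
  assumes dec: "decseq (\<lambda>m. sq_dist k p c (b m))" and \<phi>: "strict_mono \<phi>"
    and sub: "\<forall>t<k. \<forall>l<p. (\<lambda>j. b (\<phi> j) t l) \<longlonglongrightarrow> c t l"
  shows "\<forall>t<k. \<forall>l<p. (\<lambda>m. b m t l) \<longlonglongrightarrow> c t l"
proof -
  define E where "E = (\<lambda>m. sq_dist k p c (b m))"
  have "\<forall>m. 0 \<le> E m"
    unfolding E_def by (simp add: sq_dist_nonneg)
  then obtain L where L: "E \<longlonglongrightarrow> L"
    using decseq_convergent dec unfolding E_def[symmetric] by blast
  have "(\<lambda>j. (c t l - b (\<phi> j) t l)\<^sup>2) \<longlonglongrightarrow> (c t l - c t l)\<^sup>2" if "t < k" "l < p" for t l
    using sub that by (intro tendsto_intros) auto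
  then have "(\<lambda>j. E (\<phi> j)) \<longlonglongrightarrow> (\<Sum>t<k. \<Sum>l<p. (c t l - c t l)\<^sup>2)"
    unfolding E_def sq_dist_def by (intro tendsto_sum) auto
  moreover have "(\<lambda>j. E (\<phi> j)) \<longlonglongrightarrow> L"
    using LIMSEQ_subseq_LIMSEQ[OF L \<phi>] by (simp add: o_def)
  ultimately have "L = 0"
    using LIMSEQ_unique by force
  then have E0: "(\<lambda>m. sqrt (E m)) \<longlonglongrightarrow> 0"
    using tendsto_real_sqrt[OF L] by simp
  show ?thesis
  proof (intro allI impI)
    fix t l assume "t < k" "l < p"
    then have "norm (b m t l - c t l) \<le> sqrt (E m)" for m
      using abs_le_sqrt_sq_dist[of t k l p c "b m"] unfolding E_def by (simp add: abs_minus_commute)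
    then have "(\<lambda>m. b m t l - c t l) \<longlonglongrightarrow> 0"
      by (intro Lim_null_comparison[OF _ E0] always_eventually allI)
    then show "(\<lambda>m. b m t l) \<longlonglongrightarrow> c t l"
      by (simp add: LIM_zero_iff)
  qed
qed

locale three_point_descent =
  fixes k p :: nat and F :: "(nat \<Rightarrow> nat \<Rightarrow> real) \<Rightarrow> real"
    and b :: "nat \<Rightarrow> nat \<Rightarrow> nat \<Rightarrow> real" and A :: "nat \<Rightarrow> real" and Amax :: real
  assumes A_pos: "0 < A m" and A_le: "A m \<le> Amax"
    and descent: "F (b (Suc m)) + A m / 2 * sq_dist k p x (b (Suc m))
                    \<le> F x + A m / 2 * sq_dist k p x (b m)"
begin

lemma fejer_monotone:
  assumes "\<forall>z. F xs \<le> F z"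
  shows "decseq (\<lambda>m. sq_dist k p xs (b m))"
proof (rule decseq_SucI)
  fix m
  have "A m / 2 * sq_dist k p xs (b (Suc m)) \<le> A m / 2 * sq_dist k p xs (b m)"
    using descent[of m xs] assms[rule_format, of "b (Suc m)"] by linarith
  then show "sq_dist k p xs (b (Suc m)) \<le> sq_dist k p xs (b m)"
    using A_pos[of m] by simp
qed

lemma iterate_values_LIMSEQ_min:
  assumes min: "\<forall>z. F xs \<le> F z"
  shows "(\<lambda>m. F (b m)) \<longlonglongrightarrow> F xs"
proof -
  define D where "D = (\<lambda>m. sq_dist k p xs (b m))"
  have "decseq D"
    using fejer_monotone[OF min] unfolding D_def .
  moreover have "\<forall>m. 0 \<le> D m"
    unfolding D_def by (simp add: sq_dist_nonneg)
  ultimately obtain L where L: "D \<longlonglongrightarrow> L"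
    using decseq_convergent by blast
  have "(\<lambda>m. Amax / 2 * (D m - D (Suc m))) \<longlonglongrightarrow> Amax / 2 * (L - L)"
    by (intro tendsto_intros L LIMSEQ_Suc)
  then have gap_lim: "(\<lambda>m. Amax / 2 * (D m - D (Suc m))) \<longlonglongrightarrow> 0"
    by simp
  have "F (b (Suc m)) - F xs \<le> Amax / 2 * (D m - D (Suc m))" for m
  proof -
    have "0 \<le> D m - D (Suc m)"
      using \<open>decseq D\<close> by (simp add: decseq_Suc_iff)
    moreover have "F (b (Suc m)) - F xs \<le> A m / 2 * (D m - D (Suc m))"
      using descent[of m xs] unfolding D_def by (simp add: right_diff_distrib)
    ultimately show ?thesis
      using A_le[of m] by (meson divide_right_mono mult_right_mono order_trans zero_le_numeral)
  qed
  then have "(\<lambda>m. F (b (Suc m)) - F xs) \<longlonglongrightarrow> 0"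
    using min by (intro real_tendsto_sandwich[OF _ _ tendsto_const gap_lim] always_eventually allI) simp_all
  then have "(\<lambda>m. F (b (Suc m))) \<longlonglongrightarrow> F xs"
    by (simp add: LIM_zero_iff)
  then show ?thesis
    by (rule LIMSEQ_imp_Suc)
qed

lemma converges_to_minimizer:
  assumes "\<exists>xs. \<forall>z. F xs \<le> F z"
    and cont: "\<And>z c. \<forall>t<k. \<forall>l<p. (\<lambda>j. z j t l) \<longlonglongrightarrow> c t l \<Longrightarrow> (\<lambda>j. F (z j)) \<longlonglongrightarrow> F c"
  shows "\<exists>bstar. (\<forall>z. F bstar \<le> F z) \<and> (\<forall>t<k. \<forall>l<p. (\<lambda>m. b m t l) \<longlonglongrightarrow> bstar t l)"
proof -
  obtain xs where xs: "\<forall>z. F xs \<le> F z"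
    using assms(1) by blast
  have "\<bar>b m t l\<bar> \<le> \<bar>xs t l\<bar> + sqrt (sq_dist k p xs (b 0))" if "t < k" "l < p" for m t l
  proof -
    have "\<bar>xs t l - b m t l\<bar> \<le> sqrt (sq_dist k p xs (b m))"
      using abs_le_sqrt_sq_dist[OF that] .
    also have "\<dots> \<le> sqrt (sq_dist k p xs (b 0))"
      using decseqD[OF fejer_monotone[OF xs], of 0 m] by simp
    finally show ?thesis
      by linarith
  qed
  then have "\<forall>(t, l)\<in>{..<k} \<times> {..<p}. \<exists>B. \<forall>m. \<bar>b m t l\<bar> \<le> B"
    by blast
  with bounded_coords_convergent_subseq[of "{..<k} \<times> {..<p}" b]
  obtain \<phi> bstar where \<phi>: "strict_mono \<phi>"
    and sub: "\<forall>(t, l)\<in>{..<k} \<times> {..<p}. (\<lambda>j. b (\<phi> j) t l) \<longlonglongrightarrow> bstar t l"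
    by auto
  then have sub': "\<forall>t<k. \<forall>l<p. (\<lambda>j. b (\<phi> j) t l) \<longlonglongrightarrow> bstar t l"
    by blast
  have "(\<lambda>j. F (b (\<phi> j))) \<longlonglongrightarrow> F bstar"
    by (rule cont[OF sub'])
  moreover have "(\<lambda>j. F (b (\<phi> j))) \<longlonglongrightarrow> F xs"
    using LIMSEQ_subseq_LIMSEQ[OF iterate_values_LIMSEQ_min[OF xs] \<phi>] by (simp add: o_def)
  ultimately have "F bstar = F xs"
    by (rule LIMSEQ_unique)
  then have min: "\<forall>z. F bstar \<le> F z"
    using xs by simp
  show ?thesis
    using decseq_sq_dist_subseq_imp_LIMSEQ[OF fejer_monotone[OF min] \<phi> sub'] min by blast
qed

end

lemma objective_nonneg:
  assumes "0 \<le> lam"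
  shows "0 \<le> objective k p n X Y lam z"
  unfolding objective_def res_norm_def using assms
  by (intro add_nonneg_nonneg divide_nonneg_nonneg sum_nonneg mult_nonneg_nonneg) (auto intro!: sum_nonneg)

lemma abs_le_objective:
  assumes "0 \<le> lam" "t < k" "l < p"
  shows "lam * \<bar>z t l\<bar> \<le> objective k p n X Y lam z"
proof -
  have "\<bar>z t l\<bar> = sqrt ((z t l)\<^sup>2)"
    by simp
  also have "\<dots> \<le> sqrt (\<Sum>t<k. (z t l)\<^sup>2)"
    using assms by (intro real_sqrt_le_mono member_le_sum) auto
  also have "\<dots> \<le> (\<Sum>l<p. sqrt (\<Sum>t<k. (z t l)\<^sup>2))"
    using assms by (intro member_le_sum) (auto intro: sum_nonneg)
  finally have "lam * \<bar>z t l\<bar> \<le> lam * (\<Sum>l<p. sqrt (\<Sum>t<k. (z t l)\<^sup>2))"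
    using assms by (intro mult_left_mono) auto
  moreover have "0 \<le> (\<Sum>t<k. res_norm p n X Y t (z t)) / sqrt (real (n0 k n))"
    unfolding res_norm_def by (intro divide_nonneg_nonneg sum_nonneg) (auto intro!: sum_nonneg)
  ultimately show ?thesis
    unfolding objective_def by linarith
qed

lemma objective_LIMSEQ:
  assumes "\<forall>t<k. \<forall>l<p. (\<lambda>j. z j t l) \<longlonglongrightarrow> c t l"
  shows "(\<lambda>j. objective k p n X Y lam (z j)) \<longlonglongrightarrow> objective k p n X Y lam c"
  unfolding objective_def res_norm_def divide_inverse using assms by (intro tendsto_intros) auto

lemma objective_has_minimizer:
  assumes lam: "0 < lam"
  shows "\<exists>bmin. \<forall>z. objective k p n X Y lam bmin \<le> objective k p n X Y lam z"
proof -
  let ?F = "objective k p n X Y lam"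
  define Fmin where "Fmin = Inf (range ?F)"
  have "bdd_below (range ?F)"
    using objective_nonneg lam by (intro bdd_belowI[of _ 0]) (auto simp: less_imp_le)
  then have Fmin_le: "Fmin \<le> ?F z" for z
    unfolding Fmin_def by (intro cInf_lower) auto
  have "\<exists>z. ?F z < Fmin + inverse (real (Suc j))" for j
    using cInf_lessD[of "range ?F" "Fmin + inverse (real (Suc j))"] unfolding Fmin_def by auto
  then obtain z where z: "\<And>j. ?F (z j) < Fmin + inverse (real (Suc j))"
    by metis
  have "\<bar>z j t l\<bar> \<le> (Fmin + 1) / lam" if "t < k" "l < p" for j t l
  proof -
    have "lam * \<bar>z j t l\<bar> \<le> ?F (z j)"
      using abs_le_objective lam that by (simp add: less_imp_le)
    also have "\<dots> \<le> Fmin + 1"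
      using z[of j] inverse_le_1_iff[of "real (Suc j)"] by simp
    finally show ?thesis
      using lam by (simp add: le_divide_eq mult.commute)
  qed
  then have "\<forall>(t, l)\<in>{..<k} \<times> {..<p}. \<exists>B. \<forall>j. \<bar>z j t l\<bar> \<le> B"
    by blast
  with bounded_coords_convergent_subseq[of "{..<k} \<times> {..<p}" z]
  obtain \<phi> c where \<phi>: "strict_mono \<phi>"
    and sub: "\<forall>(t, l)\<in>{..<k} \<times> {..<p}. (\<lambda>j. z (\<phi> j) t l) \<longlonglongrightarrow> c t l"
    by auto
  have "(\<lambda>j. ?F (z j)) \<longlonglongrightarrow> Fmin"
    using Fmin_le z
    by (intro real_tendsto_sandwich[OF _ _ tendsto_const LIMSEQ_inverse_real_of_nat_add]
        always_eventually allI) (auto intro: less_imp_le)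
  from LIMSEQ_subseq_LIMSEQ[OF this \<phi>] have "(\<lambda>j. ?F (z (\<phi> j))) \<longlonglongrightarrow> Fmin"
    by (simp add: o_def)
  moreover have "(\<lambda>j. ?F (z (\<phi> j))) \<longlonglongrightarrow> ?F c"
    using sub by (intro objective_LIMSEQ) auto
  ultimately have "?F c = Fmin"
    using LIMSEQ_unique by blast
  then show ?thesis
    using Fmin_le by metis
qed

lemma sit_step_converges:
  fixes b :: "nat \<Rightarrow> nat \<Rightarrow> nat \<Rightarrow> real"
  assumes k: "0 < k" and lam: "0 < lam" and frob: "\<forall>t<k. (\<Sum>i<n t. \<Sum>j<p. (X t i j)\<^sup>2) \<le> 1"
    and n0: "0 < n0 k n" and c: "0 < c"
    and res_ge: "\<And>m t. t < k \<Longrightarrow> c \<le> res_norm p n X Y t (b m t)"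
    and iter: "\<And>m. b (Suc m) = sit_step k p n X Y lam (b m)"
  shows "\<exists>bstar. (\<forall>z. objective k p n X Y lam bstar \<le> objective k p n X Y lam z)
                \<and> (\<forall>t<k. \<forall>l<p. (\<lambda>m. b m t l) \<longlonglongrightarrow> bstar t l)"
proof -
  define s0 where "s0 = sqrt (real (n0 k n))"
  define A where "A m = (\<Sum>t<k. 1 / (s0 * res_norm p n X Y t (b m t)))" for m
  have "0 < s0"
    using n0 unfolding s0_def by simp
  have res_pos: "0 < res_norm p n X Y t (b m t)" if "t < k" for m t
    using res_ge[OF that, of m] c by linarith
  interpret three_point_descent k p "objective k p n X Y lam" b A "real k / (s0 * c)"
  proof
    fix m x
    show "0 < A m"
      unfolding A_def using k res_pos \<open>0 < s0\<close> by (intro sum_pos) auto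
    have "A m \<le> (\<Sum>t<k. 1 / (s0 * c))"
      unfolding A_def using res_ge res_pos c \<open>0 < s0\<close>
      by (intro sum_mono divide_left_mono mult_left_mono mult_pos_pos) auto
    then show "A m \<le> real k / (s0 * c)"
      by simp
    show "objective k p n X Y lam (b (Suc m)) + A m / 2 * sq_dist k p x (b (Suc m))
            \<le> objective k p n X Y lam x + A m / 2 * sq_dist k p x (b m)"
      unfolding iter A_def s0_def using k lam frob n0 res_pos
      by (intro sit_step_descent) auto
  qed
  show ?thesis
    using converges_to_minimizer objective_has_minimizer[OF lam] objective_LIMSEQ by blast
qed

lemma res_norm_rescale:
  assumes "0 < K"
  shows "res_norm p n (\<lambda>t i j. X t i j / K) (\<lambda>t i. Y t i / K) t z = res_norm p n X Y t z / K"
proof -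
  have "((\<Sum>j<p. X t i j / K * z j) - Y t i / K)\<^sup>2 = ((\<Sum>j<p. X t i j * z j) - Y t i)\<^sup>2 / K\<^sup>2" for i
    by (simp add: sum_divide_distrib[symmetric] diff_divide_distrib[symmetric] power_divide)
  then show ?thesis
    using assms by (simp add: res_norm_def real_sqrt_divide flip: sum_divide_distrib)
qed

lemma objective_rescale:
  assumes "0 < K"
  shows "objective k p n (\<lambda>t i j. X t i j / K) (\<lambda>t i. Y t i / K) (lam / K) z
           = objective k p n X Y lam z / K"
  unfolding objective_def res_norm_rescale[OF assms] using assms
  by (simp add: sum_divide_distrib[symmetric] add_divide_distrib)

lemma frobenius_rescaled_le_one:
  fixes X :: "nat \<Rightarrow> nat \<Rightarrow> nat \<Rightarrow> real"
  assumes "t < k" and K: "1 + (\<Sum>t<k. \<Sum>i<n t. \<Sum>j<p. (X t i j)\<^sup>2) \<le> K"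
  shows "(\<Sum>i<n t. \<Sum>j<p. (X t i j / K)\<^sup>2) \<le> 1"
proof -
  have "0 \<le> (\<Sum>t<k. \<Sum>i<n t. \<Sum>j<p. (X t i j)\<^sup>2)"
    by (auto intro!: sum_nonneg)
  then have "1 \<le> K"
    using K by linarith
  have "(\<Sum>i<n t. \<Sum>j<p. (X t i j)\<^sup>2) \<le> (\<Sum>t<k. \<Sum>i<n t. \<Sum>j<p. (X t i j)\<^sup>2)"
    using assms(1) by (intro member_le_sum) (auto intro!: sum_nonneg)
  also have "\<dots> \<le> K"
    using K by linarith
  also have "\<dots> \<le> K * K"
    using mult_right_mono[OF \<open>1 \<le> K\<close>, of K] \<open>1 \<le> K\<close> by simp
  finally show ?thesis
    using \<open>1 \<le> K\<close> by (simp add: power_divide sum_divide_distrib[symmetric] power2_eq_square)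
qed

lemma n0_pos:
  assumes "0 < k" and "\<forall>t<k. 0 < res_norm p n X Y t (z t)"
  shows "0 < n0 k n"
proof -
  have "n0 k n \<in> n ` {..<k}"
    unfolding n0_def using assms(1) by (intro Min_in) auto
  then obtain t where "t < k" "n0 k n = n t"
    by auto
  moreover have "n t \<noteq> 0"
  proof
    assume "n t = 0"
    then have "res_norm p n X Y t (z t) = 0"
      by (simp add: res_norm_def)
    then show False
      using assms(2) \<open>t < k\<close> by (metis less_irrefl)
  qed
  ultimately show ?thesis
    by simp
qed

lemma INF_seg_set_le_res_norm:
  "(INF z\<in>seg_set beta t. res_norm p n X Y t z) \<le> res_norm p n X Y t (beta m t)"
proof (rule cINF_lower)
  show "beta m t \<in> seg_set beta t"
    unfolding seg_set_def by (rule CollectI, rule exI[of _ 1], rule exI[of _ m]) auto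
  show "bdd_below (res_norm p n X Y t ` seg_set beta t)"
    by (rule bdd_belowI[of _ 0]) (auto simp: res_norm_def intro!: sum_nonneg)
qed

lemma sit_iter_converges:
  fixes X :: "nat \<Rightarrow> nat \<Rightarrow> nat \<Rightarrow> real" and Y :: "nat \<Rightarrow> nat \<Rightarrow> real"
  assumes k: "0 < k" and lam: "0 < lam" and K: "0 < K" and c: "0 < c"
    and frob: "\<forall>t<k. (\<Sum>i<n t. \<Sum>j<p. (X t i j / K)\<^sup>2) \<le> 1"
    and res_gt: "\<And>m t. t < k \<Longrightarrow> c < res_norm p n X Y t (sit_iter k p n X Y lam K b0 m t)"
  shows "\<exists>bstar. (\<forall>b. objective k p n X Y lam bstar \<le> objective k p n X Y lam b)
                \<and> (\<forall>t<k. \<forall>l<p. (\<lambda>m. sit_iter k p n X Y lam K b0 m t l) \<longlonglongrightarrow> bstar t l)"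
proof -
  define b where "b = sit_iter k p n X Y lam K b0"
  have n0: "0 < n0 k n"
    using n0_pos[of k p n X Y "b 0"] k res_gt c unfolding b_def by (meson less_trans)
  have res_ge: "c / K \<le> res_norm p n (\<lambda>t i j. X t i j / K) (\<lambda>t i. Y t i / K) t (b m t)"
    if "t < k" for m t
    using res_gt[OF that, of m] K unfolding res_norm_rescale[OF K] b_def
    by (simp add: divide_right_mono)
  have iter: "b (Suc m) = sit_step k p n (\<lambda>t i j. X t i j / K) (\<lambda>t i. Y t i / K) (lam / K) (b m)"
    for m
    by (simp add: b_def sit_iter_def)
  have "0 < lam / K" "0 < c / K"
    using lam c K by simp_all
  from sit_step_converges[where n = n and X = "\<lambda>t i j. X t i j / K" and Y = "\<lambda>t i. Y t i / K"
      and b = b, OF k this(1) frob n0 this(2) res_ge iter]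
  obtain bstar
    where min: "\<forall>z. objective k p n (\<lambda>t i j. X t i j / K) (\<lambda>t i. Y t i / K) (lam / K) bstar
                    \<le> objective k p n (\<lambda>t i j. X t i j / K) (\<lambda>t i. Y t i / K) (lam / K) z"
      and lim: "\<forall>t<k. \<forall>l<p. (\<lambda>m. b m t l) \<longlonglongrightarrow> bstar t l"
    by blast
  have "\<forall>z. objective k p n X Y lam bstar \<le> objective k p n X Y lam z"
    using min K by (simp add: objective_rescale divide_le_cancel)
  then show ?thesis
    using lim unfolding b_def by blast
qed

theorem theorem6:
  fixes k p :: nat and n :: "nat \<Rightarrow> nat"
    and X :: "nat \<Rightarrow> nat \<Rightarrow> nat \<Rightarrow> real" and Y :: "nat \<Rightarrow> nat \<Rightarrow> real"
    and lam c0 :: real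
  assumes "0 < k" and "0 < lam" and "0 < c0"
  shows "\<exists>K1>0. \<forall>K0\<ge>K1. \<forall>b0.
           (\<forall>t<k. c0 < (INF z\<in>seg_set (sit_iter k p n X Y lam K0 b0) t. res_norm p n X Y t z))
           \<longrightarrow> (\<exists>bstar. (\<forall>b. objective k p n X Y lam bstar \<le> objective k p n X Y lam b)
                  \<and> (\<forall>t<k. \<forall>l<p. (\<lambda>m. sit_iter k p n X Y lam K0 b0 m t l) \<longlonglongrightarrow> bstar t l))"
proof -
  define K1 where "K1 = 1 + (\<Sum>t<k. \<Sum>i<n t. \<Sum>j<p. (X t i j)\<^sup>2)"
  have "1 \<le> K1"
    unfolding K1_def by (auto intro!: sum_nonneg)
  have "\<exists>bstar. (\<forall>b. objective k p n X Y lam bstar \<le> objective k p n X Y lam b)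
                \<and> (\<forall>t<k. \<forall>l<p. (\<lambda>m. sit_iter k p n X Y lam K0 b0 m t l) \<longlonglongrightarrow> bstar t l)"
    if K0: "K1 \<le> K0"
      and seg: "\<forall>t<k. c0 < (INF z\<in>seg_set (sit_iter k p n X Y lam K0 b0) t. res_norm p n X Y t z)"
    for K0 b0
  proof (rule sit_iter_converges)
    show "0 < K0"
      using \<open>1 \<le> K1\<close> K0 by linarith
    show "\<forall>t<k. (\<Sum>i<n t. \<Sum>j<p. (X t i j / K0)\<^sup>2) \<le> 1"
      using K0 unfolding K1_def by (blast intro: frobenius_rescaled_le_one order_trans)
    show "c0 < res_norm p n X Y t (sit_iter k p n X Y lam K0 b0 m t)" if "t < k" for m t
      using seg that INF_seg_set_le_res_norm by (blast intro: less_le_trans)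
  qed (use assms in auto)
  then show ?thesis
    using \<open>1 \<le> K1\<close> by (intro exI[of _ K1]) auto
qed

end
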